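(* Let $f(z)=z+\sum_{n=2}^{\infty}a_nz^n\in\mathcal{S}^{*}_{\rho}$. Then $$|H_{2,3}(f)|=|a_3a_5-a_4^2|\le 0.146048 .$$
   Context: Let $\mathbb{D}=\{z\in\mathbb{C}:|z|<1\}$. For analytic $g_1,g_2$ on $\mathbb{D}$, $g_1\prec g_2$ means there is an analytic $w:\mathbb{D}\to\mathbb{D}$ with $w(0)=0$ such that $g_1=g_2\circ w$. Here $\sinh^{-1}$ denotes the principal branch of the inverse hyperbolic sine with $\sinh^{-1}(0)=0$, analytic on $\mathbb{D}$. The class $\mathcal{S}^{*}_{\rho}$ consists of all univalent analytic functions $f$ on $\mathbb{D}$ with $f(z)=z+\sum_{n\ge2}a_nz^n$ such that $\frac{zf'(z)}{f(z)}\prec 1+\sinh^{-1}(z)$. *)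

theory Defs
  imports "HOL-Complex_Analysis.Complex_Analysis"
begin

definition subordinate :: "(complex \<Rightarrow> complex) \<Rightarrow> (complex \<Rightarrow> complex) \<Rightarrow> bool" where
  "subordinate g1 g2 \<longleftrightarrow>
     (\<exists>w. w holomorphic_on ball 0 1 \<and> w ` ball 0 1 \<subseteq> ball 0 1 \<and> w 0 = 0 \<and>
          (\<forall>z\<in>ball 0 1. g1 z = g2 (w z)))"

definition taylor_coeff :: "(complex \<Rightarrow> complex) \<Rightarrow> nat \<Rightarrow> complex" where
  "taylor_coeff f n = (deriv ^^ n) f 0 / fact n"

text \<open>The class S*_rho: normalized univalent analytic f on D with z f'/f \<prec> 1 + arsinh z.
  The value of z f'(z)/f(z) at z = 0 is taken as its limit 1 (removable singularity).\<close>
definition S_rho :: "(complex \<Rightarrow> complex) set" where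
  "S_rho = {f. f holomorphic_on ball 0 1 \<and> inj_on f (ball 0 1) \<and> f 0 = 0 \<and> deriv f 0 = 1 \<and>
              subordinate (\<lambda>z. if z = 0 then 1 else z * deriv f z / f z) (\<lambda>z. 1 + arsinh z)}"

end

theory Submission
  imports Defs
begin

text \<open>
  For \<open>f \<in> S*\<^sub>\<rho>\<close> write \<open>z f'/f = 1 + q\<close>; subordination gives a Schwarz function \<open>w\<close> with
  \<open>q = arsinh \<circ> w\<close>, i.e. \<open>w = sinh \<circ> q\<close>.  Comparing Taylor coefficients expresses \<open>a\<^sub>3, a\<^sub>4, a\<^sub>5\<close>,
  and hence \<open>H\<^sub>2\<^sub>,\<^sub>3(f) = a\<^sub>3 a\<^sub>5 - a\<^sub>4\<^sup>2\<close>, as a polynomial in the coefficients \<open>c\<^sub>1, \<dots>, c\<^sub>4\<close> of \<open>w\<close>.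

  Writing \<open>w(z) = z g(z)\<close> and performing one step of Schur's algorithm on \<open>g\<close> (normalise by a
  Moebius map, divide by \<open>z\<close>) yields \<open>c\<^sub>2 = s d\<^sub>0\<close>, \<open>c\<^sub>3 = s d\<^sub>1 - cnj c\<^sub>1 d\<^sub>0 c\<^sub>2\<close>,
  \<open>c\<^sub>4 = s d\<^sub>2 - cnj c\<^sub>1 (d\<^sub>0 c\<^sub>3 + d\<^sub>1 c\<^sub>2)\<close> with \<open>s = 1 - |c\<^sub>1|\<^sup>2\<close>, \<open>|d\<^sub>0| \<le> 1\<close> and
  \<open>|d\<^sub>1|, |d\<^sub>2| \<le> 1 - |d\<^sub>0|\<^sup>2\<close>, the last two by the same Schur step applied once more.  After
  substitution and the triangle inequality, \<open>|H\<^sub>2\<^sub>,\<^sub>3(f)|\<close> is bounded by a polynomial in \<open>|c\<^sub>1|\<close> and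
  \<open>|d\<^sub>0|\<close> with nonnegative coefficients; its maximum over the unit square (about 0.1332) is
  certified to lie below 0.146048 by a finite bisection of the square.
\<close>

lemma taylor_coeff_cong:
  assumes "open S" "0 \<in> S" "\<And>z. z \<in> S \<Longrightarrow> f z = g z"
  shows "taylor_coeff f n = taylor_coeff g n"
proof -
  have "\<forall>\<^sub>F z in nhds 0. f z = g z"
    using eventually_nhds_in_open[OF assms(1,2)] assms(3) by (auto elim!: eventually_mono)
  then show ?thesis
    unfolding taylor_coeff_def using higher_deriv_cong_ev by metis
qed

lemma taylor_coeff_0 [simp]: "taylor_coeff f 0 = f 0"
  by (simp add: taylor_coeff_def)

lemma taylor_coeff_const: "taylor_coeff (\<lambda>z. c) n = (if n = 0 then c else 0)"
  by (simp add: taylor_coeff_def)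

lemma taylor_coeff_add:
  assumes "f holomorphic_on S" "g holomorphic_on S" "open S" "0 \<in> S"
  shows "taylor_coeff (\<lambda>z. f z + g z) n = taylor_coeff f n + taylor_coeff g n"
  using higher_deriv_add[OF assms] by (simp add: taylor_coeff_def add_divide_distrib)

lemma taylor_coeff_diff:
  assumes "f holomorphic_on S" "g holomorphic_on S" "open S" "0 \<in> S"
  shows "taylor_coeff (\<lambda>z. f z - g z) n = taylor_coeff f n - taylor_coeff g n"
  using higher_deriv_diff[OF assms] by (simp add: taylor_coeff_def diff_divide_distrib)

lemma taylor_coeff_cmult:
  assumes "f holomorphic_on S" "open S" "0 \<in> S"
  shows "taylor_coeff (\<lambda>z. c * f z) n = c * taylor_coeff f n"
  using higher_deriv_cmult[OF assms(1,3,2)] by (simp add: taylor_coeff_def)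

lemma taylor_coeff_mult:
  assumes "f holomorphic_on S" "g holomorphic_on S" "open S" "0 \<in> S"
  shows "taylor_coeff (\<lambda>z. f z * g z) n = (\<Sum>i=0..n. taylor_coeff f i * taylor_coeff g (n - i))"
proof -
  have "taylor_coeff (\<lambda>z. f z * g z) n =
      (\<Sum>i=0..n. of_nat (n choose i) * (deriv ^^ i) f 0 * (deriv ^^ (n - i)) g 0) / fact n"
    using higher_deriv_mult[OF assms] by (simp add: taylor_coeff_def)
  also have "\<dots> = (\<Sum>i=0..n. taylor_coeff f i * taylor_coeff g (n - i))"
    unfolding sum_divide_distrib taylor_coeff_def
  proof (rule sum.cong[OF refl])
    fix i assume "i \<in> {0..n}"
    then have "of_nat (n choose i) = (fact n / (fact i * fact (n - i)) :: complex)"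
      by (simp add: binomial_fact)
    then show "of_nat (n choose i) * (deriv ^^ i) f 0 * (deriv ^^ (n - i)) g 0 / fact n =
        (deriv ^^ i) f 0 / fact i * ((deriv ^^ (n - i)) g 0 / fact (n - i))"
      by (simp add: field_simps)
  qed
  finally show ?thesis .
qed

lemma taylor_coeff_deriv: "taylor_coeff (deriv f) n = of_nat (Suc n) * taylor_coeff f (Suc n)"
proof -
  have "(deriv ^^ n) (deriv f) = (deriv ^^ Suc n) f"
    by (simp add: funpow_Suc_right del: funpow.simps)
  then show ?thesis
    by (simp add: taylor_coeff_def fact_Suc field_simps del: funpow.simps of_nat_Suc)
qed

lemma taylor_coeff_times_ident:
  assumes "g holomorphic_on S" "open S" "0 \<in> S"
  shows "taylor_coeff (\<lambda>z. z * g z) (Suc n) = taylor_coeff g n"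
proof -
  have "taylor_coeff (\<lambda>z. z * g z) (Suc n) =
      (\<Sum>i=0..Suc n. taylor_coeff (\<lambda>z. z) i * taylor_coeff g (Suc n - i))"
    using assms by (intro taylor_coeff_mult) (auto intro: holomorphic_intros)
  also have "\<dots> = (\<Sum>i\<in>{0..Suc n}. if i = 1 then taylor_coeff g n else 0)"
    by (rule sum.cong) (auto simp: taylor_coeff_def)
  finally show ?thesis by simp
qed

lemma taylor_coeff_eq_0_if_constant_on:
  assumes "h constant_on S" "open S" "0 \<in> S" "n > 0"
  shows "taylor_coeff h n = 0"
proof -
  obtain c where "\<And>z. z \<in> S \<Longrightarrow> h z = c"
    using assms(1) by (auto simp: constant_on_def)
  then show ?thesis
    using taylor_coeff_cong[OF assms(2,3), of h "\<lambda>z. c"] assms(4) by (simp add: taylor_coeff_const)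
qed

lemma self_map_constant_or_into:
  assumes "h holomorphic_on ball 0 1" "\<And>z. z \<in> ball 0 1 \<Longrightarrow> cmod (h z) \<le> 1"
  shows "h constant_on ball 0 1 \<or> h ` ball 0 1 \<subseteq> ball 0 1"
proof (cases "h ` ball 0 1 \<subseteq> ball 0 1")
  case False
  then obtain \<xi> where "\<xi> \<in> ball 0 1" "cmod (h \<xi>) = 1"
    using assms(2) by (force simp: dist_norm)
  then have "h constant_on ball 0 1"
    using assms by (intro maximum_modulus_principle[of h _ "ball 0 1" \<xi>]) auto
  then show ?thesis ..
qed simp

lemma mobius_denom_nonzero:
  fixes u a :: complex
  assumes "cmod u \<le> 1" "cmod a < 1"
  shows "1 - cnj a * u \<noteq> 0"
proof
  assume "1 - cnj a * u = 0"
  then have "cmod a * cmod u = 1"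
    by (metis complex_mod_cnj eq_iff_diff_eq_0 norm_mult norm_one)
  moreover have "cmod a * cmod u \<le> cmod a"
    using assms(1) by (simp add: mult_left_le)
  ultimately show False
    using assms(2) by simp
qed

lemma norm_mobius_less_1:
  fixes u a :: complex
  assumes "cmod u < 1" "cmod a < 1"
  shows "cmod ((u - a) / (1 - cnj a * u)) < 1"
proof -
  have "(cmod (1 - cnj a * u))\<^sup>2 - (cmod (u - a))\<^sup>2 = (1 - (cmod a)\<^sup>2) * (1 - (cmod u)\<^sup>2)"
    unfolding cmod_power2 by (simp add: power2_eq_square algebra_simps)
  moreover have "0 < (1 - (cmod a)\<^sup>2) * (1 - (cmod u)\<^sup>2)"
    using assms by (simp add: abs_square_less_1)
  ultimately have "cmod (u - a) < cmod (1 - cnj a * u)"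
    by (simp add: power2_less_imp_less)
  then show ?thesis
    by (simp add: norm_divide divide_less_eq)
qed

lemma mobius_self_map:
  assumes "h holomorphic_on ball 0 1" "h ` ball 0 1 \<subseteq> ball 0 1"
  defines "m \<equiv> \<lambda>z. (h z - h 0) / (1 - cnj (h 0) * h z)"
  shows "m holomorphic_on ball 0 1" "m ` ball 0 1 \<subseteq> ball 0 1"
proof -
  have into: "cmod (h z) < 1" if "z \<in> ball 0 1" for z
    using assms(2) that by (auto simp: image_subset_iff)
  then have "cmod (h 0) < 1" by simp
  then show "m holomorphic_on ball 0 1"
    unfolding m_def using into mobius_denom_nonzero
    by (intro holomorphic_intros assms(1)) (auto simp: less_imp_le)
  show "m ` ball 0 1 \<subseteq> ball 0 1"
    using into \<open>cmod (h 0) < 1\<close> by (auto simp: m_def norm_mobius_less_1)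
qed

lemma taylor_coeffs_mobius:
  assumes "h holomorphic_on ball 0 1" "h ` ball 0 1 \<subseteq> ball 0 1"
  defines "a \<equiv> h 0"
  defines "m \<equiv> \<lambda>z. (h z - a) / (1 - cnj a * h z)"
  defines "s \<equiv> 1 - cnj a * a"
  shows "taylor_coeff h 1 = s * taylor_coeff m 1"
    and "taylor_coeff h 2 = s * taylor_coeff m 2 - cnj a * taylor_coeff m 1 * taylor_coeff h 1"
    and "taylor_coeff h 3 =
           s * taylor_coeff m 3 - cnj a * (taylor_coeff m 1 * taylor_coeff h 2 + taylor_coeff m 2 * taylor_coeff h 1)"
proof -
  note m = mobius_self_map[OF assms(1,2), folded a_def, folded m_def]
  have into: "cmod (h z) < 1" if "z \<in> ball 0 1" for z
    using assms(2) that by (auto simp: image_subset_iff)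
  then have "cmod a < 1" by (simp add: a_def)
  then have eq: "h z - a = m z * (1 - cnj a * h z)" if "z \<in> ball 0 1" for z
    using mobius_denom_nonzero[of "h z" a] into[OF that] by (simp add: m_def)
  have one_minus: "taylor_coeff (\<lambda>z. 1 - cnj a * h z) k = (if k = 0 then 1 else 0) - cnj a * taylor_coeff h k"
    for k
  proof -
    have "taylor_coeff (\<lambda>z. 1 - cnj a * h z) k = taylor_coeff (\<lambda>z. 1) k - taylor_coeff (\<lambda>z. cnj a * h z) k"
      using assms(1) by (intro taylor_coeff_diff holomorphic_intros) auto
    then show ?thesis
      using taylor_coeff_cmult[OF assms(1)] by (simp add: taylor_coeff_const)
  qed
  have rec: "taylor_coeff h n = (\<Sum>i=0..n. taylor_coeff m i *
      ((if n - i = 0 then 1 else 0) - cnj a * taylor_coeff h (n - i)))" if "n > 0" for n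
  proof -
    have "taylor_coeff h n = taylor_coeff (\<lambda>z. h z - a) n"
      using that taylor_coeff_diff[OF assms(1) holomorphic_on_const, of a] by (simp add: taylor_coeff_const)
    also have "\<dots> = taylor_coeff (\<lambda>z. m z * (1 - cnj a * h z)) n"
      using eq by (intro taylor_coeff_cong[of "ball 0 1"]) auto
    also have "\<dots> = (\<Sum>i=0..n. taylor_coeff m i * taylor_coeff (\<lambda>z. 1 - cnj a * h z) (n - i))"
      using m(1) assms(1) by (intro taylor_coeff_mult holomorphic_intros) auto
    finally show ?thesis
      by (simp add: one_minus)
  qed
  have "m 0 = 0" by (simp add: m_def a_def)
  with rec[of 1] rec[of 2] rec[of 3] show
    "taylor_coeff h 1 = s * taylor_coeff m 1"
    "taylor_coeff h 2 = s * taylor_coeff m 2 - cnj a * taylor_coeff m 1 * taylor_coeff h 1"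
    "taylor_coeff h 3 =
       s * taylor_coeff m 3 - cnj a * (taylor_coeff m 1 * taylor_coeff h 2 + taylor_coeff m 2 * taylor_coeff h 1)"
    by (simp_all add: s_def a_def eval_nat_numeral algebra_simps)
qed

lemma schwarz_factor:
  assumes "m holomorphic_on ball 0 1" "m ` ball 0 1 \<subseteq> ball 0 1" "m 0 = 0"
  obtains n where "n holomorphic_on ball 0 1" "\<And>z. z \<in> ball 0 1 \<Longrightarrow> cmod (n z) \<le> 1"
    "\<And>k. taylor_coeff m (Suc k) = taylor_coeff n k"
proof -
  have into: "cmod (m z) < 1" if "cmod z < 1" for z
    using assms(2) that by (auto simp: image_subset_iff)
  obtain n where n: "n holomorphic_on ball 0 1" "\<And>z. cmod z < 1 \<Longrightarrow> m z = z * n z" "deriv m 0 = n 0"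
    using Schwarz3[OF assms(1,3)] by metis
  have "cmod (n z) \<le> 1" if "z \<in> ball 0 1" for z
  proof (cases "z = 0")
    case True
    then show ?thesis
      using Schwarz_Lemma(2)[OF assms(1,3) into, of 0] n(3) by simp
  next
    case False
    then show ?thesis
      using Schwarz_Lemma(1)[OF assms(1,3) into, of z] n(2)[of z] that by (simp add: norm_mult)
  qed
  moreover have "taylor_coeff m (Suc k) = taylor_coeff n k" for k
  proof -
    have "taylor_coeff m (Suc k) = taylor_coeff (\<lambda>z. z * n z) (Suc k)"
      using n(2) by (intro taylor_coeff_cong[of "ball 0 1"]) auto
    also have "\<dots> = taylor_coeff n k"
      using n(1) by (intro taylor_coeff_times_ident) auto
    finally show ?thesis .
  qed
  ultimately show ?thesis
    using that n(1) by blast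
qed

lemma one_minus_cnj_mult_self: "1 - cnj a * a = complex_of_real (1 - (cmod a)\<^sup>2)"
  using complex_norm_square[of a] by (simp add: mult.commute)

text \<open>One step of Schur's algorithm: \<open>n\<close> is the Moebius normalisation of \<open>h\<close> divided by \<open>z\<close>;
  for constant \<open>h\<close> one may take \<open>n = 0\<close>.\<close>

lemma self_map_factorization:
  assumes "h holomorphic_on ball 0 1" "\<And>z. z \<in> ball 0 1 \<Longrightarrow> cmod (h z) \<le> 1"
  defines "a \<equiv> h 0" and "s \<equiv> complex_of_real (1 - (cmod (h 0))\<^sup>2)"
  obtains n where "n holomorphic_on ball 0 1" "\<And>z. z \<in> ball 0 1 \<Longrightarrow> cmod (n z) \<le> 1"
    "taylor_coeff h 1 = s * n 0"
    "taylor_coeff h 2 = s * taylor_coeff n 1 - cnj a * n 0 * taylor_coeff h 1"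
    "taylor_coeff h 3 =
       s * taylor_coeff n 2 - cnj a * (n 0 * taylor_coeff h 2 + taylor_coeff n 1 * taylor_coeff h 1)"
  using self_map_constant_or_into[OF assms(1,2)]
proof
  assume "h constant_on ball 0 1"
  then have const: "taylor_coeff h k = 0" if "k > 0" for k
    using that by (intro taylor_coeff_eq_0_if_constant_on) auto
  show ?thesis
    by (rule that[of "\<lambda>z. 0"]) (simp_all add: const taylor_coeff_const)
next
  assume into: "h ` ball 0 1 \<subseteq> ball 0 1"
  define m where "m = (\<lambda>z. (h z - a) / (1 - cnj a * h z))"
  note m = mobius_self_map[OF assms(1) into, folded a_def, folded m_def]
  have "m 0 = 0"
    by (simp add: m_def a_def)
  obtain n where n: "n holomorphic_on ball 0 1" "\<And>z. z \<in> ball 0 1 \<Longrightarrow> cmod (n z) \<le> 1"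
    "\<And>k. taylor_coeff m (Suc k) = taylor_coeff n k"
    using schwarz_factor[OF m \<open>m 0 = 0\<close>] by blast
  have s: "1 - cnj a * a = s"
    unfolding s_def a_def by (rule one_minus_cnj_mult_self)
  have m_n: "taylor_coeff m 1 = n 0" "taylor_coeff m 2 = taylor_coeff n 1" "taylor_coeff m 3 = taylor_coeff n 2"
    using n(3)[of 0] n(3)[of 1] n(3)[of 2] by (simp_all add: eval_nat_numeral)
  note mobius = taylor_coeffs_mobius[OF assms(1) into, folded a_def, folded m_def, unfolded s m_n]
  show ?thesis
    by (rule that[OF n(1,2) mobius])
qed

lemma self_map_taylor_coeff_1_bound:
  assumes "h holomorphic_on ball 0 1" "\<And>z. z \<in> ball 0 1 \<Longrightarrow> cmod (h z) \<le> 1"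
  shows "cmod (taylor_coeff h 1) \<le> 1 - (cmod (h 0))\<^sup>2"
proof -
  define s where "s = 1 - (cmod (h 0))\<^sup>2"
  obtain n where "n holomorphic_on ball 0 1" and n: "\<And>z. z \<in> ball 0 1 \<Longrightarrow> cmod (n z) \<le> 1"
    and h1: "taylor_coeff h 1 = complex_of_real s * n 0"
    and "taylor_coeff h 2 = complex_of_real s * taylor_coeff n 1 - cnj (h 0) * n 0 * taylor_coeff h 1"
    and "taylor_coeff h 3 = complex_of_real s * taylor_coeff n 2 -
           cnj (h 0) * (n 0 * taylor_coeff h 2 + taylor_coeff n 1 * taylor_coeff h 1)"
    using self_map_factorization[OF assms, folded s_def] by blast
  have "0 \<le> s"
    using assms(2)[of 0] by (simp add: s_def abs_square_le_1)
  then have "cmod (taylor_coeff h 1) = s * cmod (n 0)"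
    unfolding h1 by (simp only: norm_mult norm_of_real abs_of_nonneg)
  also have "\<dots> \<le> s"
    using n[of 0] \<open>0 \<le> s\<close> by (simp add: mult_left_le)
  finally show ?thesis
    by (simp add: s_def)
qed

lemma self_map_taylor_coeff_2_bound:
  assumes "h holomorphic_on ball 0 1" "\<And>z. z \<in> ball 0 1 \<Longrightarrow> cmod (h z) \<le> 1"
  shows "cmod (taylor_coeff h 2) \<le> 1 - (cmod (h 0))\<^sup>2"
proof -
  define s where "s = 1 - (cmod (h 0))\<^sup>2"
  obtain n where n: "n holomorphic_on ball 0 1" "\<And>z. z \<in> ball 0 1 \<Longrightarrow> cmod (n z) \<le> 1"
    and h1: "taylor_coeff h 1 = complex_of_real s * n 0"
    and h2: "taylor_coeff h 2 = complex_of_real s * taylor_coeff n 1 - cnj (h 0) * n 0 * taylor_coeff h 1"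
    and "taylor_coeff h 3 = complex_of_real s * taylor_coeff n 2 -
           cnj (h 0) * (n 0 * taylor_coeff h 2 + taylor_coeff n 1 * taylor_coeff h 1)"
    using self_map_factorization[OF assms, folded s_def] by blast
  have "0 \<le> s"
    using assms(2)[of 0] by (simp add: s_def abs_square_le_1)
  have "taylor_coeff h 2 = complex_of_real s * (taylor_coeff n 1 - cnj (h 0) * (n 0)\<^sup>2)"
    unfolding h2 h1 by (simp add: power2_eq_square algebra_simps)
  also have "cmod \<dots> \<le> s * (cmod (taylor_coeff n 1) + cmod (h 0) * (cmod (n 0))\<^sup>2)"
  proof -
    have "cmod (taylor_coeff n 1 - cnj (h 0) * (n 0)\<^sup>2) \<le> cmod (taylor_coeff n 1) + cmod (h 0) * (cmod (n 0))\<^sup>2"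
      using norm_triangle_ineq4[of "taylor_coeff n 1" "cnj (h 0) * (n 0)\<^sup>2"] by (simp add: norm_mult norm_power)
    with \<open>0 \<le> s\<close> show ?thesis
      by (simp add: norm_mult mult_left_mono)
  qed
  also have "\<dots> \<le> s"
  proof -
    have "cmod (h 0) * (cmod (n 0))\<^sup>2 \<le> (cmod (n 0))\<^sup>2"
      using assms(2)[of 0] by (simp add: mult_left_le_one_le)
    then have "cmod (taylor_coeff n 1) + cmod (h 0) * (cmod (n 0))\<^sup>2 \<le> 1"
      using self_map_taylor_coeff_1_bound[OF n(1,2)] by linarith
    with \<open>0 \<le> s\<close> show ?thesis
      using mult_left_mono[of _ 1 s] by simp
  qed
  finally show ?thesis
    by (simp add: s_def)
qed

lemma sinh_arsinh_complex: "sinh (arsinh u) = (u :: complex)"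
proof -
  define r where "r = csqrt (u\<^sup>2 + 1)"
  have r2: "r\<^sup>2 = u\<^sup>2 + 1"
    by (simp add: r_def)
  have nz: "u + r \<noteq> 0"
  proof
    assume "u + r = 0"
    then have "r\<^sup>2 = u\<^sup>2"
      by (simp add: eq_neg_iff_add_eq_0[symmetric])
    with r2 show False by simp
  qed
  have "arsinh u = ln (u + r)"
    by (simp add: arsinh_def r_def csqrt_conv_powr)
  then have "sinh (arsinh u) = ((u + r) - inverse (u + r)) / 2"
    using nz by (simp add: sinh_ln_complex)
  also have "\<dots> = ((u + r)\<^sup>2 - 1) / (2 * (u + r))"
    using nz by (simp add: field_simps power2_eq_square)
  also have "(u + r)\<^sup>2 - 1 = u * (2 * (u + r))"
    using r2 by (simp add: power2_eq_square algebra_simps)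
  finally show ?thesis
    using nz by (metis mult_eq_0_iff nonzero_mult_div_cancel_right zero_neq_numeral)
qed

lemma taylor_coeffs_exp_comp:
  assumes "q holomorphic_on S" "open S" "0 \<in> S" "q 0 = 0"
  defines "Q \<equiv> taylor_coeff q"
  shows "taylor_coeff (\<lambda>z. exp (q z)) 1 = Q 1"
    and "taylor_coeff (\<lambda>z. exp (q z)) 2 = Q 2 + Q 1 ^ 2 / 2"
    and "taylor_coeff (\<lambda>z. exp (q z)) 3 = Q 3 + Q 1 * Q 2 + Q 1 ^ 3 / 6"
    and "taylor_coeff (\<lambda>z. exp (q z)) 4 =
           Q 4 + Q 1 * Q 3 + Q 2 ^ 2 / 2 + Q 1 ^ 2 * Q 2 / 2 + Q 1 ^ 4 / 24"
proof -
  define v where "v = (\<lambda>z. exp (q z))"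
  define V where "V = taylor_coeff v"
  have hv: "v holomorphic_on S"
    unfolding v_def by (intro holomorphic_intros assms(1))
  have hdq: "deriv q holomorphic_on S"
    using assms(1,2) by (rule holomorphic_deriv)
  have dv: "deriv v z = deriv q z * v z" if "z \<in> S" for z
  proof -
    have "(q has_field_derivative deriv q z) (at z)"
      using assms(1,2) that by (rule holomorphic_derivI)
    then have "(v has_field_derivative exp (q z) * deriv q z) (at z)"
      unfolding v_def by (rule DERIV_chain2[OF DERIV_exp])
    then show ?thesis
      by (simp add: DERIV_imp_deriv v_def mult.commute)
  qed
  have rec: "V (Suc n) = (\<Sum>i=0..n. of_nat (Suc i) * Q (Suc i) * V (n - i)) / of_nat (Suc n)" for n
  proof -
    have "of_nat (Suc n) * V (Suc n) = taylor_coeff (deriv v) n"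
      by (simp add: V_def taylor_coeff_deriv)
    also have "\<dots> = taylor_coeff (\<lambda>z. deriv q z * v z) n"
      using dv assms(2,3) by (intro taylor_coeff_cong) auto
    also have "\<dots> = (\<Sum>i=0..n. taylor_coeff (deriv q) i * V (n - i))"
      unfolding V_def using hdq hv assms(2,3) by (rule taylor_coeff_mult)
    finally show ?thesis
      by (simp add: Q_def taylor_coeff_deriv eq_divide_eq mult.commute del: of_nat_Suc)
  qed
  have "V 0 = 1" "Q 0 = 0"
    by (simp_all add: V_def v_def Q_def assms(4))
  with rec[of 0] rec[of 1] rec[of 2] rec[of 3]
  have r: "V 1 = Q 1" "V 2 = (Q 1 * V 1 + 2 * Q 2) / 2" "V 3 = (Q 1 * V 2 + 2 * Q 2 * V 1 + 3 * Q 3) / 3"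
    "V 4 = (Q 1 * V 3 + 2 * Q 2 * V 2 + 3 * Q 3 * V 1 + 4 * Q 4) / 4"
    by (simp_all add: eval_nat_numeral algebra_simps)
  have V2: "V 2 = Q 2 + Q 1 ^ 2 / 2"
    unfolding r(2) r(1) by (simp add: field_simps power2_eq_square)
  have V3: "V 3 = Q 3 + Q 1 * Q 2 + Q 1 ^ 3 / 6"
    unfolding r(3) V2 r(1) by (simp add: field_simps power2_eq_square power3_eq_cube)
  have V4: "V 4 = Q 4 + Q 1 * Q 3 + Q 2 ^ 2 / 2 + Q 1 ^ 2 * Q 2 / 2 + Q 1 ^ 4 / 24"
    unfolding r(4) V3 V2 r(1) by (simp add: field_simps power2_eq_square power3_eq_cube power4_eq_xxxx)
  from r(1) V2 V3 V4 show "taylor_coeff (\<lambda>z. exp (q z)) 1 = Q 1"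
    "taylor_coeff (\<lambda>z. exp (q z)) 2 = Q 2 + Q 1 ^ 2 / 2"
    "taylor_coeff (\<lambda>z. exp (q z)) 3 = Q 3 + Q 1 * Q 2 + Q 1 ^ 3 / 6"
    "taylor_coeff (\<lambda>z. exp (q z)) 4 = Q 4 + Q 1 * Q 3 + Q 2 ^ 2 / 2 + Q 1 ^ 2 * Q 2 / 2 + Q 1 ^ 4 / 24"
    unfolding V_def v_def .
qed

lemma taylor_coeffs_sinh_comp:
  assumes "q holomorphic_on S" "open S" "0 \<in> S" "q 0 = 0"
  defines "Q \<equiv> taylor_coeff q"
  shows "taylor_coeff (\<lambda>z. sinh (q z)) 1 = Q 1"
    and "taylor_coeff (\<lambda>z. sinh (q z)) 2 = Q 2"
    and "taylor_coeff (\<lambda>z. sinh (q z)) 3 = Q 3 + Q 1 ^ 3 / 6"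
    and "taylor_coeff (\<lambda>z. sinh (q z)) 4 = Q 4 + Q 1 ^ 2 * Q 2 / 2"
proof -
  have hq': "(\<lambda>z. - q z) holomorphic_on S"
    using assms(1) by (intro holomorphic_intros)
  have Q': "taylor_coeff (\<lambda>z. - q z) k = - Q k" for k
    using taylor_coeff_cmult[OF assms(1-3), of "-1" k] by (simp add: Q_def)
  have E: "taylor_coeff (\<lambda>z. sinh (q z)) k =
      (taylor_coeff (\<lambda>z. exp (q z)) k - taylor_coeff (\<lambda>z. exp (- q z)) k) / 2" for k
  proof -
    have "taylor_coeff (\<lambda>z. sinh (q z)) k = taylor_coeff (\<lambda>z. (1/2) * (exp (q z) - exp (- q z))) k"
      by (simp add: sinh_field_def)
    also have "\<dots> = (1/2) * taylor_coeff (\<lambda>z. exp (q z) - exp (- q z)) k"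
      using assms(1-3) by (intro taylor_coeff_cmult holomorphic_intros)
    also have "\<dots> = (1/2) * (taylor_coeff (\<lambda>z. exp (q z)) k - taylor_coeff (\<lambda>z. exp (- q z)) k)"
      using assms(1-3) hq' by (subst taylor_coeff_diff) (auto intro!: holomorphic_intros)
    finally show ?thesis by simp
  qed
  note P = taylor_coeffs_exp_comp[OF assms(1-4), folded Q_def]
  have "- q 0 = 0"
    by (simp add: assms(4))
  note M = taylor_coeffs_exp_comp[OF hq' assms(2,3) this, unfolded Q']
  show "taylor_coeff (\<lambda>z. sinh (q z)) 1 = Q 1" "taylor_coeff (\<lambda>z. sinh (q z)) 2 = Q 2"
    "taylor_coeff (\<lambda>z. sinh (q z)) 3 = Q 3 + Q 1 ^ 3 / 6"
    "taylor_coeff (\<lambda>z. sinh (q z)) 4 = Q 4 + Q 1 ^ 2 * Q 2 / 2"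
    unfolding E P M by (simp_all add: field_simps power2_eq_square power3_eq_cube)
qed

lemma taylor_coeffs_of_log_deriv:
  assumes "f holomorphic_on S" "q holomorphic_on S" "open S" "0 \<in> S"
    and "f 0 = 0" "deriv f 0 = 1" "q 0 = 0"
    and "\<And>z. z \<in> S \<Longrightarrow> z * deriv f z = f z * (1 + q z)"
  defines "Q \<equiv> taylor_coeff q"
  shows "taylor_coeff f 3 = (Q 2 + Q 1 ^ 2) / 2"
    and "taylor_coeff f 4 = Q 3 / 3 + Q 1 * Q 2 / 2 + Q 1 ^ 3 / 6"
    and "taylor_coeff f 5 = Q 4 / 4 + Q 1 * Q 3 / 3 + Q 2 ^ 2 / 8 + Q 1 ^ 2 * Q 2 / 4 + Q 1 ^ 4 / 24"
proof -
  define A where "A = taylor_coeff f"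
  have "deriv f holomorphic_on S"
    using assms(1,3) by (rule holomorphic_deriv)
  then have zf': "taylor_coeff (\<lambda>z. z * deriv f z) n = of_nat n * A n" for n
    using assms(3,4) by (cases n) (simp_all add: taylor_coeff_times_ident taylor_coeff_deriv A_def)
  have one_plus_q: "taylor_coeff (\<lambda>z. 1 + q z) k = (if k = 0 then 1 else 0) + Q k" for k
    using taylor_coeff_add[OF holomorphic_on_const assms(2-4)] by (simp add: Q_def taylor_coeff_const)
  have rec: "of_nat n * A n = (\<Sum>i=0..n. A i * ((if n - i = 0 then 1 else 0) + Q (n - i)))" for n
  proof -
    have "of_nat n * A n = taylor_coeff (\<lambda>z. z * deriv f z) n"
      by (rule zf'[symmetric])
    also have "\<dots> = taylor_coeff (\<lambda>z. f z * (1 + q z)) n"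
      using assms(3,4,8) by (intro taylor_coeff_cong) auto
    also have "\<dots> = (\<Sum>i=0..n. A i * taylor_coeff (\<lambda>z. 1 + q z) (n - i))"
      unfolding A_def using assms(1-4) by (intro taylor_coeff_mult holomorphic_intros) auto
    finally show ?thesis
      by (simp add: one_plus_q)
  qed
  have "A 0 = 0" "A 1 = 1" "Q 0 = 0"
    using assms(5-7) by (simp_all add: A_def Q_def taylor_coeff_def)
  with rec[of 2] rec[of 3] rec[of 4] rec[of 5]
  have e: "2 * A 2 = Q 1 + A 2" "3 * A 3 = Q 2 + A 2 * Q 1 + A 3"
    "4 * A 4 = Q 3 + A 2 * Q 2 + A 3 * Q 1 + A 4"
    "5 * A 5 = Q 4 + A 2 * Q 3 + A 3 * Q 2 + A 4 * Q 1 + A 5"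
    by (simp_all add: eval_nat_numeral algebra_simps)
  have "A 2 = Q 1" "2 * A 3 = Q 2 + A 2 * Q 1" "3 * A 4 = Q 3 + A 2 * Q 2 + A 3 * Q 1"
    "4 * A 5 = Q 4 + A 2 * Q 3 + A 3 * Q 2 + A 4 * Q 1"
    using e by algebra+
  then have r: "A 2 = Q 1" "A 3 = (Q 2 + A 2 * Q 1) / 2" "A 4 = (Q 3 + A 2 * Q 2 + A 3 * Q 1) / 3"
    "A 5 = (Q 4 + A 2 * Q 3 + A 3 * Q 2 + A 4 * Q 1) / 4"
    by (simp_all add: eq_divide_eq mult.commute)
  have A3: "A 3 = (Q 2 + Q 1 ^ 2) / 2"
    unfolding r(2) r(1) by (simp add: power2_eq_square)
  have A4: "A 4 = Q 3 / 3 + Q 1 * Q 2 / 2 + Q 1 ^ 3 / 6"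
    unfolding r(3) A3 r(1) by (simp add: field_simps power2_eq_square power3_eq_cube)
  have A5: "A 5 = Q 4 / 4 + Q 1 * Q 3 / 3 + Q 2 ^ 2 / 8 + Q 1 ^ 2 * Q 2 / 4 + Q 1 ^ 4 / 24"
    unfolding r(4) A4 A3 r(1) by (simp add: field_simps power2_eq_square power3_eq_cube power4_eq_xxxx)
  from A3 A4 A5 show "taylor_coeff f 3 = (Q 2 + Q 1 ^ 2) / 2"
    "taylor_coeff f 4 = Q 3 / 3 + Q 1 * Q 2 / 2 + Q 1 ^ 3 / 6"
    "taylor_coeff f 5 = Q 4 / 4 + Q 1 * Q 3 / 3 + Q 2 ^ 2 / 8 + Q 1 ^ 2 * Q 2 / 4 + Q 1 ^ 4 / 24"
    unfolding A_def .
qed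

lemma S_rho_taylor_coeffs:
  assumes "f \<in> S_rho"
  obtains w where "w holomorphic_on ball 0 1" "w ` ball 0 1 \<subseteq> ball 0 1" "w 0 = 0"
    and "taylor_coeff f 3 = (taylor_coeff w 2 + taylor_coeff w 1 ^ 2) / 2"
    and "taylor_coeff f 4 =
      taylor_coeff w 3 / 3 + taylor_coeff w 1 * taylor_coeff w 2 / 2 + taylor_coeff w 1 ^ 3 / 9"
    and "taylor_coeff f 5 =
      taylor_coeff w 4 / 4 + taylor_coeff w 1 * taylor_coeff w 3 / 3 + taylor_coeff w 2 ^ 2 / 8
      + taylor_coeff w 1 ^ 2 * taylor_coeff w 2 / 8 - taylor_coeff w 1 ^ 4 / 72"
proof -
  from assms have hf: "f holomorphic_on ball 0 1" and inj: "inj_on f (ball 0 1)"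
    and f0: "f 0 = 0" and df0: "deriv f 0 = 1"
    and sub: "subordinate (\<lambda>z. if z = 0 then 1 else z * deriv f z / f z) (\<lambda>z. 1 + arsinh z)"
    unfolding S_rho_def by auto
  from sub obtain w where w: "w holomorphic_on ball 0 1" "w ` ball 0 1 \<subseteq> ball 0 1" "w 0 = 0"
    and weq: "\<And>z. z \<in> ball 0 1 \<Longrightarrow> (if z = 0 then 1 else z * deriv f z / f z) = 1 + arsinh (w z)"
    unfolding subordinate_def by auto
  obtain h where hh: "h holomorphic_on ball 0 1" and fh: "\<And>z. cmod z < 1 \<Longrightarrow> f z = z * h z"
    and h0: "deriv f 0 = h 0"
    using Schwarz3[OF hf f0] by metis
  \<comment> \<open>Univalence makes \<open>f(z)/z\<close> zero-free, so that \<open>z f'/f - 1\<close> is holomorphic.\<close>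
  have h_nz: "h z \<noteq> 0" if "z \<in> ball 0 1" for z
  proof (cases "z = 0")
    case False
    then have "f z \<noteq> f 0"
      using inj that by (auto simp: inj_on_def)
    then show ?thesis
      using fh[of z] that f0 by auto
  qed (use h0 df0 in simp)
  define q where "q = (\<lambda>z. deriv f z / h z - 1)"
  have hq: "q holomorphic_on ball 0 1"
    unfolding q_def using h_nz by (intro holomorphic_intros holomorphic_deriv hf hh) auto
  have q0: "q 0 = 0"
    by (simp add: q_def df0 h0[symmetric])
  have log_deriv: "z * deriv f z = f z * (1 + q z)" if "z \<in> ball 0 1" for z
    using fh[of z] h_nz[OF that] that by (simp add: q_def)
  have "w z = sinh (q z)" if "z \<in> ball 0 1" for z
  proof (cases "z = 0")
    case False
    then have "z * deriv f z / f z = 1 + q z"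
      using log_deriv[OF that] fh[of z] h_nz[OF that] that by (auto simp: field_simps)
    then have "q z = arsinh (w z)"
      using weq[OF that] False by simp
    then show ?thesis
      by (simp add: sinh_arsinh_complex)
  qed (simp add: w(3) q0)
  then have w_sinh: "taylor_coeff w k = taylor_coeff (\<lambda>z. sinh (q z)) k" for k
    by (intro taylor_coeff_cong[of "ball 0 1"]) auto
  have disc: "open (ball (0::complex) 1)" "(0::complex) \<in> ball 0 1"
    by simp_all
  define c where "c = taylor_coeff w"
  have q_c: "taylor_coeff q 1 = c 1" "taylor_coeff q 2 = c 2" "taylor_coeff q 3 = c 3 - c 1 ^ 3 / 6"
    "taylor_coeff q 4 = c 4 - c 1 ^ 2 * c 2 / 2"
    unfolding c_def w_sinh using taylor_coeffs_sinh_comp[OF hq disc q0] by simp_all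
  note a = taylor_coeffs_of_log_deriv[OF hf hq disc f0 df0 q0 log_deriv, unfolded q_c]
  have a3: "taylor_coeff f 3 = (c 2 + c 1 ^ 2) / 2"
    by (rule a(1))
  have a4: "taylor_coeff f 4 = (c 3 - c 1 ^ 3 / 6) / 3 + c 1 * c 2 / 2 + c 1 ^ 3 / 6"
    by (rule a(2))
  have a5: "taylor_coeff f 5 =
      (c 4 - c 1 ^ 2 * c 2 / 2) / 4 + c 1 * (c 3 - c 1 ^ 3 / 6) / 3 + c 2 ^ 2 / 8 + c 1 ^ 2 * c 2 / 4 + c 1 ^ 4 / 24"
    by (rule a(3))
  show ?thesis
    by (rule that[OF w]; unfold c_def[symmetric] a3 a4 a5)
      (simp_all add: field_simps power2_eq_square power3_eq_cube power4_eq_xxxx)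
qed

text \<open>\<open>a\<^sub>3 a\<^sub>5 - a\<^sub>4\<^sup>2\<close> in terms of the coefficients \<open>c\<^sub>k\<close> of the Schwarz function, see
  \<open>S_rho_taylor_coeffs\<close>.\<close>

definition hankel23_schwarz :: "complex \<Rightarrow> complex \<Rightarrow> complex \<Rightarrow> complex \<Rightarrow> complex" where
  "hankel23_schwarz c1 c2 c3 c4 =
     (c2 + c1\<^sup>2) / 2 * (c4 / 4 + c1 * c3 / 3 + c2\<^sup>2 / 8 + c1\<^sup>2 * c2 / 8 - c1 ^ 4 / 72)
     - (c3 / 3 + c1 * c2 / 2 + c1 ^ 3 / 9)\<^sup>2"

definition hankel_majorant :: "real \<Rightarrow> real \<Rightarrow> real \<Rightarrow> real \<Rightarrow> real" where
  "hankel_majorant x s y t =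
     s\<^sup>2 / 8 * (y * t) + (x\<^sup>2 * s\<^sup>2 / 6 + s ^ 3 / 16 + x ^ 4 * s / 8) * y ^ 3 + s\<^sup>2 / 72 * (x\<^sup>2 * y ^ 4)
     + s / 8 * (x\<^sup>2 * t) + 5 * s / 54 * (x ^ 3 * t)
     + s\<^sup>2 / 9 * t\<^sup>2 + s\<^sup>2 / 36 * (x * y\<^sup>2 * t) + (s\<^sup>2 / 6 + x\<^sup>2 * s / 4) * (x * y * t)
     + (s\<^sup>2 / 8 + 5 * x\<^sup>2 * s / 54) * (x\<^sup>2 * y\<^sup>2) + s / 18 * (x ^ 4 * y) + 25 / 1296 * x ^ 6"

lemma hankel23_schwarz_expansion_ring:
  fixes c1 c2 c3 c4 a d0 d1 d2 S X :: complex
  assumes "c1 * a = X" "S = 1 - X"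
    and c2: "c2 = S * d0"
    and c3: "c3 = S * d1 - a * d0 * c2"
    and c4: "c4 = S * d2 - a * (d0 * c3 + d1 * c2)"
  shows "hankel23_schwarz c1 c2 c3 c4 =
      S\<^sup>2 / 8 * (d0 * d2) + (X * S\<^sup>2 / 6 + S ^ 3 / 16 + X\<^sup>2 * S / 8) * d0 ^ 3
    + S\<^sup>2 / 72 * (a\<^sup>2 * d0 ^ 4) + S / 8 * (c1\<^sup>2 * d2) + 5 * S / 54 * (c1 ^ 3 * d1)
    - (S\<^sup>2 / 9 * d1\<^sup>2 + S\<^sup>2 / 36 * (a * d0\<^sup>2 * d1) + (S\<^sup>2 / 6 + X * S / 4) * (c1 * d0 * d1)
       + (S\<^sup>2 / 8 + 5 * X * S / 54) * (c1\<^sup>2 * d0\<^sup>2) + S / 18 * (c1 ^ 4 * d0) + 25 / 1296 * c1 ^ 6)"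
  unfolding hankel23_schwarz_def c4 c3 c2 assms(2) assms(1)[symmetric]
  by (simp add: field_simps eval_nat_numeral)

lemma hankel23_schwarz_expansion:
  fixes c1 d0 d1 d2 :: complex
  assumes "cmod c1 = x" "s = 1 - x\<^sup>2"
    and "c2 = of_real s * d0"
    and "c3 = of_real s * d1 - cnj c1 * d0 * c2"
    and "c4 = of_real s * d2 - cnj c1 * (d0 * c3 + d1 * c2)"
  shows "hankel23_schwarz c1 c2 c3 c4 =
      of_real (s\<^sup>2 / 8) * (d0 * d2) + of_real (x\<^sup>2 * s\<^sup>2 / 6 + s ^ 3 / 16 + x ^ 4 * s / 8) * d0 ^ 3
    + of_real (s\<^sup>2 / 72) * (cnj c1 ^ 2 * d0 ^ 4) + of_real (s / 8) * (c1\<^sup>2 * d2) + of_real (5 * s / 54) * (c1 ^ 3 * d1)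
    - (of_real (s\<^sup>2 / 9) * d1\<^sup>2 + of_real (s\<^sup>2 / 36) * (cnj c1 * d0\<^sup>2 * d1)
       + of_real (s\<^sup>2 / 6 + x\<^sup>2 * s / 4) * (c1 * d0 * d1)
       + of_real (s\<^sup>2 / 8 + 5 * x\<^sup>2 * s / 54) * (c1\<^sup>2 * d0\<^sup>2) + of_real (s / 18) * (c1 ^ 4 * d0)
       + of_real (25 / 1296) * c1 ^ 6)"
proof -
  have "c1 * cnj c1 = of_real (x\<^sup>2)"
    using complex_norm_square[of c1] assms(1) by simp
  moreover have "of_real s = 1 - complex_of_real (x\<^sup>2)"
    by (simp add: assms(2))
  ultimately show ?thesis
    using hankel23_schwarz_expansion_ring[OF _ _ assms(3-5)] by (simp add: power_mult[symmetric])
qed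

lemma norm_of_real_mult_le: "0 \<le> k \<Longrightarrow> cmod m \<le> b \<Longrightarrow> cmod (of_real k * m) \<le> k * b"
  by (simp add: norm_mult mult_left_mono)

lemma norm_hankel23_schwarz_le_majorant:
  fixes c1 d0 d1 d2 :: complex
  assumes "cmod c1 \<le> 1" "cmod d1 \<le> 1 - (cmod d0)\<^sup>2" "cmod d2 \<le> 1 - (cmod d0)\<^sup>2"
    and "s = 1 - (cmod c1)\<^sup>2"
    and "c2 = of_real s * d0"
    and "c3 = of_real s * d1 - cnj c1 * d0 * c2"
    and "c4 = of_real s * d2 - cnj c1 * (d0 * c3 + d1 * c2)"
  shows "cmod (hankel23_schwarz c1 c2 c3 c4) \<le> hankel_majorant (cmod c1) s (cmod d0) (1 - (cmod d0)\<^sup>2)"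
proof -
  define x y t where "x = cmod c1" and "y = cmod d0" and "t = 1 - (cmod d0)\<^sup>2"
  have "0 \<le> s"
    using assms(1,4) by (simp add: abs_square_le_1)
  have d: "cmod d1 \<le> t" "cmod d2 \<le> t"
    using assms(2,3) by (simp_all add: t_def)
  then have "0 \<le> t"
    by (meson norm_ge_zero order_trans)
  have "0 \<le> x" "0 \<le> y"
    by (simp_all add: x_def y_def)
  note ineqs = \<open>0 \<le> s\<close> \<open>0 \<le> t\<close> \<open>0 \<le> x\<close> \<open>0 \<le> y\<close> d
  have P: "cmod (of_real (s\<^sup>2 / 8) * (d0 * d2) + of_real (x\<^sup>2 * s\<^sup>2 / 6 + s ^ 3 / 16 + x ^ 4 * s / 8) * d0 ^ 3
      + of_real (s\<^sup>2 / 72) * (cnj c1 ^ 2 * d0 ^ 4) + of_real (s / 8) * (c1\<^sup>2 * d2)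
      + of_real (5 * s / 54) * (c1 ^ 3 * d1))
    \<le> s\<^sup>2 / 8 * (y * t) + (x\<^sup>2 * s\<^sup>2 / 6 + s ^ 3 / 16 + x ^ 4 * s / 8) * y ^ 3
      + s\<^sup>2 / 72 * (x\<^sup>2 * y ^ 4) + s / 8 * (x\<^sup>2 * t) + 5 * s / 54 * (x ^ 3 * t)"
    by (intro norm_triangle_mono norm_of_real_mult_le)
      (use ineqs in \<open>simp_all add: x_def y_def norm_mult norm_power mult_left_mono\<close>)
  have N: "cmod (of_real (s\<^sup>2 / 9) * d1\<^sup>2 + of_real (s\<^sup>2 / 36) * (cnj c1 * d0\<^sup>2 * d1)
       + of_real (s\<^sup>2 / 6 + x\<^sup>2 * s / 4) * (c1 * d0 * d1)
       + of_real (s\<^sup>2 / 8 + 5 * x\<^sup>2 * s / 54) * (c1\<^sup>2 * d0\<^sup>2) + of_real (s / 18) * (c1 ^ 4 * d0)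
       + of_real (25 / 1296) * c1 ^ 6)
    \<le> s\<^sup>2 / 9 * t\<^sup>2 + s\<^sup>2 / 36 * (x * y\<^sup>2 * t) + (s\<^sup>2 / 6 + x\<^sup>2 * s / 4) * (x * y * t)
      + (s\<^sup>2 / 8 + 5 * x\<^sup>2 * s / 54) * (x\<^sup>2 * y\<^sup>2) + s / 18 * (x ^ 4 * y) + 25 / 1296 * x ^ 6"
    by (intro norm_triangle_mono norm_of_real_mult_le)
      (use ineqs in \<open>simp_all add: x_def y_def norm_mult norm_power mult_left_mono power_mono\<close>)
  show ?thesis
    unfolding hankel23_schwarz_expansion[OF x_def[symmetric] assms(4)[folded x_def] assms(5-7)]
    using order_trans[OF norm_triangle_ineq4 add_mono[OF P N]]
    by (simp add: hankel_majorant_def x_def y_def t_def)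
qed

lemma hankel_majorant_mono:
  assumes "0 \<le> x" "x \<le> x'" "0 \<le> s" "s \<le> s'" "0 \<le> y" "y \<le> y'" "0 \<le> t" "t \<le> t'"
  shows "hankel_majorant x s y t \<le> hankel_majorant x' s' y' t'"
proof -
  have "0 \<le> x'" "0 \<le> s'" "0 \<le> y'" "0 \<le> t'"
    using assms by linarith+
  with assms show ?thesis
    unfolding hankel_majorant_def
    by (intro add_mono mult_mono power_mono divide_right_mono mult_nonneg_nonneg add_nonneg_nonneg
        divide_nonneg_pos zero_le_power order_refl; simp)
qed

datatype bisection = Box | Split_x bisection bisection | Split_y bisection bisection

fun all_boxes ::
  "(real \<Rightarrow> real \<Rightarrow> real \<Rightarrow> real \<Rightarrow> bool) \<Rightarrow> bisection \<Rightarrow> real \<Rightarrow> real \<Rightarrow> real \<Rightarrow> real \<Rightarrow> bool"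
  where
    "all_boxes P Box x0 x1 y0 y1 = P x0 x1 y0 y1"
  | "all_boxes P (Split_x l r) x0 x1 y0 y1 =
       (all_boxes P l x0 ((x0 + x1) / 2) y0 y1 \<and> all_boxes P r ((x0 + x1) / 2) x1 y0 y1)"
  | "all_boxes P (Split_y l r) x0 x1 y0 y1 =
       (all_boxes P l x0 x1 y0 ((y0 + y1) / 2) \<and> all_boxes P r x0 x1 ((y0 + y1) / 2) y1)"

lemma all_boxes_sound:
  assumes "all_boxes P T x0 x1 y0 y1" "x \<in> {x0..x1}" "y \<in> {y0..y1}"
    and "\<And>a b c d. P a b c d \<Longrightarrow> x \<in> {a..b} \<Longrightarrow> y \<in> {c..d} \<Longrightarrow> Q"
  shows Q
  using assms(1-3)
proof (induction T arbitrary: x0 x1 y0 y1)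
  case Box
  then show ?case by (auto intro: assms(4))
next
  case (Split_x l r)
  then show ?case
    by (cases "x \<le> (x0 + x1) / 2") auto
next
  case (Split_y l r)
  then show ?case
    by (cases "y \<le> (y0 + y1) / 2") auto
qed

text \<open>The majorant is increasing in each argument, so on a box it is bounded by its value at
  the corner \<open>(x\<^sub>1, 1 - x\<^sub>0\<^sup>2, y\<^sub>1, 1 - y\<^sub>0\<^sup>2)\<close>.\<close>

definition hankel_box_ok :: "real \<Rightarrow> real \<Rightarrow> real \<Rightarrow> real \<Rightarrow> bool" where
  "hankel_box_ok x0 x1 y0 y1 \<longleftrightarrow> 0 \<le> x0 \<and> x1 \<le> 1 \<and> 0 \<le> y0 \<and> y1 \<le> 1 \<and>
     hankel_majorant x1 (1 - x0\<^sup>2) y1 (1 - y0\<^sup>2) \<le> 146048 / 1000000"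

definition hankel_certificate :: bisection where
  "hankel_certificate =
     Split_x (Split_x (Split_y (Split_y (Split_y Box (Split_x (Split_x Box Box) (Split_y Box
     (Split_x Box Box)))) (Split_x (Split_y (Split_y Box (Split_x Box Box)) (Split_y Box Box))
     (Split_x (Split_x (Split_y (Split_y Box Box) (Split_y Box Box)) (Split_y (Split_y Box Box)
     (Split_y Box Box))) (Split_y (Split_y (Split_x Box Box) (Split_y Box (Split_x Box Box)))
     (Split_y (Split_y (Split_x Box Box) Box) (Split_y Box Box)))))) (Split_y (Split_x (Split_y
     (Split_y Box Box) Box) (Split_y (Split_x (Split_y Box Box) (Split_y (Split_x Box Box) Box))
     (Split_y Box Box))) (Split_y (Split_x Box Box) Box))) (Split_x (Split_y (Split_y (Split_y Box
     (Split_x (Split_x (Split_x Box Box) Box) (Split_x Box Box))) (Split_x (Split_x (Split_y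
     (Split_y Box (Split_x Box Box)) (Split_y (Split_y Box Box) (Split_x Box Box))) (Split_y
     (Split_y Box (Split_x Box Box)) (Split_y (Split_y Box Box) (Split_y Box Box)))) (Split_x
     (Split_y (Split_y Box (Split_x Box Box)) (Split_y (Split_y Box Box) (Split_y Box Box)))
     (Split_y (Split_y Box (Split_x Box Box)) (Split_y (Split_y Box Box) (Split_y Box Box))))))
     (Split_x (Split_y (Split_y (Split_y (Split_y Box Box) (Split_x Box Box)) (Split_y Box Box))
     (Split_y Box Box)) (Split_y (Split_y (Split_x (Split_y (Split_x Box Box) Box) (Split_y (Split_x
     Box Box) Box)) (Split_y (Split_x Box Box) Box)) (Split_y (Split_x Box Box) Box)))) (Split_x
     (Split_y (Split_y (Split_y Box (Split_x Box Box)) (Split_x (Split_y (Split_y Box (Split_x Box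
     Box)) (Split_y (Split_y Box Box) (Split_y Box Box))) (Split_y (Split_y Box (Split_x Box Box))
     (Split_y (Split_x Box Box) (Split_y Box Box))))) (Split_y (Split_x (Split_y (Split_x (Split_y
     Box Box) (Split_y Box Box)) (Split_y Box Box)) (Split_y (Split_x (Split_y Box Box) (Split_y Box
     Box)) (Split_y Box Box))) (Split_y (Split_y Box Box) Box))) (Split_y (Split_x (Split_y Box
     (Split_y (Split_y Box (Split_x Box Box)) (Split_x (Split_y Box Box) (Split_y Box Box))))
     (Split_y Box (Split_y (Split_y Box Box) (Split_x (Split_y Box Box) (Split_y Box Box)))))
     (Split_y (Split_x (Split_y (Split_x (Split_y Box Box) (Split_y Box Box)) (Split_y Box Box))
     (Split_y (Split_x (Split_y Box Box) (Split_y Box Box)) (Split_y Box Box))) (Split_y (Split_y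
     Box Box) (Split_x Box Box))))))) (Split_x (Split_x (Split_x (Split_y (Split_x (Split_y Box
     (Split_y (Split_y Box Box) (Split_x (Split_y Box Box) (Split_y Box Box)))) (Split_y Box
     (Split_y (Split_x Box Box) (Split_y Box (Split_x Box Box))))) (Split_y (Split_x (Split_y
     (Split_x (Split_y Box Box) (Split_y Box Box)) (Split_y Box Box)) (Split_y (Split_x (Split_y Box
     Box) (Split_y Box Box)) (Split_y Box Box))) (Split_y (Split_y (Split_x Box Box) Box) (Split_x
     Box Box)))) (Split_y (Split_y Box (Split_x (Split_y (Split_x Box Box) (Split_y Box Box))
     (Split_y Box (Split_y Box Box)))) (Split_y (Split_x (Split_y (Split_y Box Box) (Split_y Box
     Box)) (Split_y (Split_y Box Box) (Split_y Box Box))) (Split_y (Split_y (Split_x Box Box) Box)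
     (Split_x Box Box))))) (Split_x (Split_y (Split_y Box (Split_x (Split_y Box (Split_x Box Box))
     (Split_y Box Box))) (Split_y (Split_x (Split_y (Split_y Box Box) (Split_y Box Box)) (Split_x
     (Split_y Box Box) (Split_y Box Box))) (Split_y (Split_y (Split_x Box Box) Box) (Split_x Box
     Box)))) (Split_y (Split_y Box (Split_y Box (Split_x Box Box))) (Split_y (Split_y (Split_x Box
     Box) (Split_y Box Box)) (Split_x (Split_y Box Box) (Split_y Box Box)))))) (Split_x (Split_x
     (Split_y (Split_x (Split_x Box Box) Box) (Split_y (Split_y Box (Split_x Box Box)) (Split_y
     (Split_x Box Box) Box))) (Split_y Box (Split_x (Split_y Box Box) (Split_y Box Box)))) (Split_x
     (Split_y Box (Split_y Box Box)) Box)))"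

lemma hankel_majorant_le:
  assumes "x \<in> {0..1}" "y \<in> {0..1}"
  shows "hankel_majorant x (1 - x\<^sup>2) y (1 - y\<^sup>2) \<le> 146048 / 1000000"
proof -
  have "all_boxes hankel_box_ok hankel_certificate 0 1 0 1"
    by (simp add: hankel_certificate_def hankel_box_ok_def hankel_majorant_def power_divide)
  then show ?thesis
  proof (rule all_boxes_sound[OF _ assms])
    fix x0 x1 y0 y1
    assume ok: "hankel_box_ok x0 x1 y0 y1" and "x \<in> {x0..x1}" "y \<in> {y0..y1}"
    then have "hankel_majorant x (1 - x\<^sup>2) y (1 - y\<^sup>2) \<le> hankel_majorant x1 (1 - x0\<^sup>2) y1 (1 - y0\<^sup>2)"
      unfolding hankel_box_ok_def
      by (intro hankel_majorant_mono) (auto simp: abs_square_le_1 power_mono)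
    with ok show ?thesis
      by (simp add: hankel_box_ok_def)
  qed
qed

lemma norm_hankel23_schwarz_coeffs_le:
  assumes "w holomorphic_on ball 0 1" "w ` ball 0 1 \<subseteq> ball 0 1" "w 0 = 0"
  shows "cmod (hankel23_schwarz (taylor_coeff w 1) (taylor_coeff w 2) (taylor_coeff w 3) (taylor_coeff w 4))
    \<le> 146048 / 1000000"
proof -
  obtain g where g: "g holomorphic_on ball 0 1" "\<And>z. z \<in> ball 0 1 \<Longrightarrow> cmod (g z) \<le> 1"
    "\<And>k. taylor_coeff w (Suc k) = taylor_coeff g k"
    using schwarz_factor[OF assms] by blast
  define s where "s = 1 - (cmod (g 0))\<^sup>2"
  obtain n where n: "n holomorphic_on ball 0 1" "\<And>z. z \<in> ball 0 1 \<Longrightarrow> cmod (n z) \<le> 1"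
    and g_n: "taylor_coeff g 1 = complex_of_real s * n 0"
      "taylor_coeff g 2 = complex_of_real s * taylor_coeff n 1 - cnj (g 0) * n 0 * taylor_coeff g 1"
      "taylor_coeff g 3 = complex_of_real s * taylor_coeff n 2 -
         cnj (g 0) * (n 0 * taylor_coeff g 2 + taylor_coeff n 1 * taylor_coeff g 1)"
    using self_map_factorization[OF g(1,2), folded s_def] by blast
  have w_g: "taylor_coeff w 1 = g 0" "taylor_coeff w 2 = taylor_coeff g 1"
    "taylor_coeff w 3 = taylor_coeff g 2" "taylor_coeff w 4 = taylor_coeff g 3"
    using g(3)[of 0] g(3)[of 1] g(3)[of 2] g(3)[of 3] by (simp_all add: eval_nat_numeral)
  have "cmod (g 0) \<le> 1" "cmod (n 0) \<le> 1"
    using g(2)[of 0] n(2)[of 0] by simp_all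
  have "cmod (hankel23_schwarz (g 0) (taylor_coeff g 1) (taylor_coeff g 2) (taylor_coeff g 3))
      \<le> hankel_majorant (cmod (g 0)) s (cmod (n 0)) (1 - (cmod (n 0))\<^sup>2)"
    by (rule norm_hankel23_schwarz_le_majorant[OF \<open>cmod (g 0) \<le> 1\<close> self_map_taylor_coeff_1_bound[OF n(1,2)]
          self_map_taylor_coeff_2_bound[OF n(1,2)] s_def g_n])
  also have "\<dots> \<le> 146048 / 1000000"
    unfolding s_def using \<open>cmod (g 0) \<le> 1\<close> \<open>cmod (n 0) \<le> 1\<close> by (intro hankel_majorant_le) auto
  finally show ?thesis
    unfolding w_g .
qed

theorem corollary2p4:
  assumes "f \<in> S_rho"
  shows "cmod (taylor_coeff f 3 * taylor_coeff f 5 - (taylor_coeff f 4)\<^sup>2) \<le> 0.146048"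
proof -
  obtain w where w: "w holomorphic_on ball 0 1" "w ` ball 0 1 \<subseteq> ball 0 1" "w 0 = 0"
    and a: "taylor_coeff f 3 = (taylor_coeff w 2 + taylor_coeff w 1 ^ 2) / 2"
      "taylor_coeff f 4 =
         taylor_coeff w 3 / 3 + taylor_coeff w 1 * taylor_coeff w 2 / 2 + taylor_coeff w 1 ^ 3 / 9"
      "taylor_coeff f 5 =
         taylor_coeff w 4 / 4 + taylor_coeff w 1 * taylor_coeff w 3 / 3 + taylor_coeff w 2 ^ 2 / 8
         + taylor_coeff w 1 ^ 2 * taylor_coeff w 2 / 8 - taylor_coeff w 1 ^ 4 / 72"
    using S_rho_taylor_coeffs[OF assms] by blast
  have "taylor_coeff f 3 * taylor_coeff f 5 - (taylor_coeff f 4)\<^sup>2 =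
      hankel23_schwarz (taylor_coeff w 1) (taylor_coeff w 2) (taylor_coeff w 3) (taylor_coeff w 4)"
    unfolding a hankel23_schwarz_def ..
  with norm_hankel23_schwarz_coeffs_le[OF w] show ?thesis
    by simp
qed

end
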